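(* Let ${\mathcal A}^0$ be a central generic arrangement of $n$ hyperplanes in $\mathbb{C}^k$ and let $\mathbb{T}=\{L_1,\dots,L_r\}$ be an $r$-set with $\bigcup_{i=1}^r L_i=[n]$. Let ${\mathcal A}^{t_1},\dots,{\mathcal A}^{t_d}$ be $K_{\mathbb{T}}$-translated arrangements of ${\mathcal A}^0$ and fix $i_0\in[r]$. Then $t_1,\dots,t_d$ are linearly independent in the quotient space $\mathbb{C}^n/C$, where $C=\{t\in\mathbb{C}^n\mid {\mathcal A}^t\text{ is a central arrangement}\}$, if and only if the associated $K_{\mathbb{T}}$-vector sets $\{v^{t_h}_{i_0,j}\}_{j\neq i_0}$, $h=1,\dots,d$, are weakly linearly independent.
   Context: A central arrangement ${\mathcal A}^0=\{H_1^0,\dots,H_n^0\}$ of linear hyperplanes in $\mathbb{C}^k$ ($k<n$) is called central generic if any $m\le k$ of its hyperplanes intersect in codimension $m$. Let $\alpha_i$ be a normal vector of $H_i^0$. For $t=(x_1,\dots,x_n)\in\mathbb{C}^n$, the translate ${\mathcal A}^t=\{H_1^{x_1},\dots,H_n^{x_n}\}$ has $H_i^{x_i}=H_i^0+\alpha_i x_i$; a translate is central if all its hyperplanes share a common point. An $r$-set is a set $\mathbb{T}=\{L_1,\dots,L_r\}$ of subsets $L_i\subset[n]=\{1,\dots,n\}$, $|L_i|=k+1$, such that $\bigcup_{i=1}^r L_i=\bigcup_{i\in I}L_i$ for every $I\subset[r]$ with $|I|=r-1$, and $L_i\cap L_j\neq\emptyset$ for all $i\ne j$. A translate ${\mathcal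 A}^t$ is $K_{\mathbb{T}}$-translated if for every $L_i\in\mathbb{T}$ the set $P_i^t=\bigcap_{p\in L_i}H_p^{x_p}$ is nonempty (hence a point) and is the intersection of exactly the $k+1$ hyperplanes indexed by $L_i$. For such ${\mathcal A}^t$ and fixed $i_0\in[r]$, its $K_{\mathbb{T}}$-vector set is the family $\{v^t_{i_0,j}\}_{j\in[r],j\neq i_0}$ of vectors in $\mathbb{C}^k$ with $P^t_{i_0}+v^t_{i_0,j}=P^t_j$. $K_{\mathbb{T}}$-vector sets $\{v^{t_h}_{i_0,j}\}_{j\ne i_0}$, $h=1,\dots,d$, are weakly linearly independent if $\sum_{h=1}^d a_h v^{t_h}_{i_0,j}=0$ for all $j\ne i_0$ (with $a_h\in\mathbb{C}$) implies $a_1=\dots=a_d=0$. *)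

theory Defs
  imports "HOL-Analysis.Analysis"
begin

text \<open>Hyperplanes in C^k are modelled in complex^'k (k = CARD('k)); the n hyperplanes
  of the arrangement are indexed by the finite type 'n (n = CARD('n), [n] = UNIV).
  alpha i is the normal vector of H_i^0 (Hermitian orthogonal complement).\<close>

definition cinner_vec :: "complex^'k \<Rightarrow> complex^'k \<Rightarrow> complex" where
  "cinner_vec p q = (\<Sum>j\<in>UNIV. p $ j * cnj (q $ j))"

definition hyp0 :: "('n \<Rightarrow> complex^'k) \<Rightarrow> 'n \<Rightarrow> (complex^'k) set" where
  "hyp0 \<alpha> i = {p. cinner_vec p (\<alpha> i) = 0}"

definition hypt :: "('n \<Rightarrow> complex^'k) \<Rightarrow> 'n \<Rightarrow> complex \<Rightarrow> (complex^'k) set" where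
  "hypt \<alpha> i x = (\<lambda>h. h + x *s \<alpha> i) ` hyp0 \<alpha> i"

definition central_generic :: "('n \<Rightarrow> complex^'k) \<Rightarrow> bool" where
  "central_generic \<alpha> \<longleftrightarrow> CARD('k) < CARD('n) \<and>
     (\<forall>S::'n set. card S \<le> CARD('k) \<longrightarrow>
        CARD('k) - vec.dim (\<Inter>i\<in>S. hyp0 \<alpha> i) = card S)"

definition central_translate :: "('n \<Rightarrow> complex^'k) \<Rightarrow> complex^'n \<Rightarrow> bool" where
  "central_translate \<alpha> t \<longleftrightarrow> (\<Inter>i\<in>UNIV. hypt \<alpha> i (t $ i)) \<noteq> {}"

definition central_set :: "('n \<Rightarrow> complex^'k) \<Rightarrow> (complex^'n) set" where
  "central_set \<alpha> = {t. central_translate \<alpha> t}"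

text \<open>r-set T = {L_1,...,L_r}, given as L indexed by [r] = {1..r}.\<close>
definition r_set :: "nat \<Rightarrow> (nat \<Rightarrow> 'n set) \<Rightarrow> nat \<Rightarrow> bool" where
  "r_set k L r \<longleftrightarrow> inj_on L {1..r} \<and>
     (\<forall>i\<in>{1..r}. card (L i) = k + 1) \<and>
     (\<forall>I\<subseteq>{1..r}. card I = r - 1 \<longrightarrow> (\<Union>i\<in>I. L i) = (\<Union>i\<in>{1..r}. L i)) \<and>
     (\<forall>i\<in>{1..r}. \<forall>j\<in>{1..r}. i \<noteq> j \<longrightarrow> L i \<inter> L j \<noteq> {})"

definition Pset :: "('n \<Rightarrow> complex^'k) \<Rightarrow> complex^'n \<Rightarrow> 'n set \<Rightarrow> (complex^'k) set" where
  "Pset \<alpha> t Li = (\<Inter>p\<in>Li. hypt \<alpha> p (t $ p))"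

definition KT_translated :: "('n \<Rightarrow> complex^'k) \<Rightarrow> (nat \<Rightarrow> 'n set) \<Rightarrow> nat \<Rightarrow> complex^'n \<Rightarrow> bool" where
  "KT_translated \<alpha> L r t \<longleftrightarrow> (\<forall>i\<in>{1..r}.
      (\<exists>P. Pset \<alpha> t (L i) = {P}) \<and>
      (\<forall>q. q \<notin> L i \<longrightarrow> Pset \<alpha> t (L i) \<inter> hypt \<alpha> q (t $ q) = {}))"

definition Ppoint :: "('n \<Rightarrow> complex^'k) \<Rightarrow> complex^'n \<Rightarrow> 'n set \<Rightarrow> complex^'k" where
  "Ppoint \<alpha> t Li = (THE P. P \<in> Pset \<alpha> t Li)"

definition KT_vec :: "('n \<Rightarrow> complex^'k) \<Rightarrow> (nat \<Rightarrow> 'n set) \<Rightarrow> complex^'n \<Rightarrow> nat \<Rightarrow> nat \<Rightarrow> complex^'k" where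
  "KT_vec \<alpha> L t i0 j = Ppoint \<alpha> t (L j) - Ppoint \<alpha> t (L i0)"

definition weakly_lin_indep ::
  "('n \<Rightarrow> complex^'k) \<Rightarrow> (nat \<Rightarrow> 'n set) \<Rightarrow> nat \<Rightarrow> nat \<Rightarrow> (nat \<Rightarrow> complex^'n) \<Rightarrow> nat \<Rightarrow> bool" where
  "weakly_lin_indep \<alpha> L r i0 ts d \<longleftrightarrow>
     (\<forall>a::nat \<Rightarrow> complex.
        (\<forall>j\<in>{1..r}. j \<noteq> i0 \<longrightarrow> (\<Sum>h\<in>{1..d}. a h *s KT_vec \<alpha> L (ts h) i0 j) = 0)
        \<longrightarrow> (\<forall>h\<in>{1..d}. a h = 0))"

text \<open>Linear independence of the classes of ts 1, ..., ts d in the quotient C^n / S,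
  S a subspace: a nontrivial combination never lies in S.\<close>
definition lin_indep_mod :: "(complex^'n) set \<Rightarrow> (nat \<Rightarrow> complex^'n) \<Rightarrow> nat \<Rightarrow> bool" where
  "lin_indep_mod S ts d \<longleftrightarrow>
     (\<forall>a::nat \<Rightarrow> complex. (\<Sum>h\<in>{1..d}. a h *s ts h) \<in> S \<longrightarrow> (\<forall>h\<in>{1..d}. a h = 0))"

end

theory Submission
  imports Defs
begin

text \<open>Write c_q for the squared norm of the normal alpha_q. A point lies on H_q^{x} iff its
  inner product with alpha_q is x c_q, so everything is linear in the translation vector.
  Hence for a combination s = sum a_h t_h the combined points Q_i = sum a_h P_i^{t_h} satisfy
  the equations of the hyperplanes H_q^{s_q}, q in L_i. If all Q_i coincide, this common
  point lies on every H_q^{s_q}, because the L_i cover [n], so s is central. Conversely, if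
  p is a common point of A^s, then Q_i - p is orthogonal to the k + 1 normals indexed by L_i,
  and genericity forces Q_i = p. So s is central exactly when all differences
  Q_j - Q_{i0} = sum a_h v^{t_h}_{i0,j} vanish, which is the claimed equivalence.\<close>

lemma cinner_vec_add: "cinner_vec (p + q) a = cinner_vec p a + cinner_vec q a"
  unfolding cinner_vec_def by (simp add: distrib_right sum.distrib)

lemma cinner_vec_diff: "cinner_vec (p - q) a = cinner_vec p a - cinner_vec q a"
  unfolding cinner_vec_def by (simp add: left_diff_distrib sum_subtractf)

lemma cinner_vec_scale: "cinner_vec (c *s p) a = c * cinner_vec p a"
  unfolding cinner_vec_def by (simp add: sum_distrib_left mult.assoc)

lemma cinner_vec_sum: "cinner_vec (sum f H) a = (\<Sum>h\<in>H. cinner_vec (f h) a)"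
  unfolding cinner_vec_def by (simp add: sum_distrib_right sum.swap[of _ UNIV H])

lemma mem_hypt_iff: "p \<in> hypt \<alpha> i x \<longleftrightarrow> cinner_vec p (\<alpha> i) = x * cinner_vec (\<alpha> i) (\<alpha> i)"
proof
  assume "p \<in> hypt \<alpha> i x"
  then obtain h where "h \<in> hyp0 \<alpha> i" "p = h + x *s \<alpha> i" unfolding hypt_def by auto
  then show "cinner_vec p (\<alpha> i) = x * cinner_vec (\<alpha> i) (\<alpha> i)"
    by (simp add: hyp0_def cinner_vec_add cinner_vec_scale)
next
  assume "cinner_vec p (\<alpha> i) = x * cinner_vec (\<alpha> i) (\<alpha> i)"
  then have "p - x *s \<alpha> i \<in> hyp0 \<alpha> i" by (simp add: hyp0_def cinner_vec_diff cinner_vec_scale)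
  moreover have "p = (p - x *s \<alpha> i) + x *s \<alpha> i" by simp
  ultimately show "p \<in> hypt \<alpha> i x" unfolding hypt_def by blast
qed

lemma central_set_iff:
  "t \<in> central_set \<alpha> \<longleftrightarrow> (\<exists>p. \<forall>q. cinner_vec p (\<alpha> q) = t $ q * cinner_vec (\<alpha> q) (\<alpha> q))"
proof -
  have "t \<in> central_set \<alpha> \<longleftrightarrow> (\<exists>p. \<forall>q. p \<in> hypt \<alpha> q (t $ q))"
    unfolding central_set_def central_translate_def by blast
  then show ?thesis by (simp add: mem_hypt_iff)
qed

lemma central_generic_orthogonal_eq_0:
  fixes \<alpha> :: "'n::finite \<Rightarrow> complex^'k::finite"
  assumes "central_generic \<alpha>" and "card Li \<ge> CARD('k)"
    and orth: "\<forall>q\<in>Li. cinner_vec u (\<alpha> q) = 0"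
  shows "u = 0"
proof -
  obtain S where S: "S \<subseteq> Li" "card S = CARD('k)"
    using assms(2) by (meson obtain_subset_with_card_n)
  have "CARD('k) - vec.dim (\<Inter>i\<in>S. hyp0 \<alpha> i) = CARD('k)"
    using assms(1) S unfolding central_generic_def by auto
  then have "vec.dim (\<Inter>i\<in>S. hyp0 \<alpha> i) = 0"
    by (metis zero_less_card_finite diff_less less_irrefl neq0_conv)
  then have "(\<Inter>i\<in>S. hyp0 \<alpha> i) \<subseteq> {0}" using vec.dim_eq_0 by blast
  moreover have "u \<in> (\<Inter>i\<in>S. hyp0 \<alpha> i)" using orth S(1) by (auto simp: hyp0_def)
  ultimately show ?thesis by blast
qed

lemma cinner_vec_Ppoint:
  assumes "KT_translated \<alpha> L r t" "i \<in> {1..r}" "q \<in> L i"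
  shows "cinner_vec (Ppoint \<alpha> t (L i)) (\<alpha> q) = t $ q * cinner_vec (\<alpha> q) (\<alpha> q)"
proof -
  obtain P where P: "Pset \<alpha> t (L i) = {P}"
    using assms(1,2) unfolding KT_translated_def by blast
  then have "Ppoint \<alpha> t (L i) = P" unfolding Ppoint_def by simp
  moreover have "P \<in> hypt \<alpha> q (t $ q)" using P assms(3) unfolding Pset_def by auto
  ultimately show ?thesis by (simp add: mem_hypt_iff)
qed

definition combined_point ::
  "('n \<Rightarrow> complex^'k) \<Rightarrow> (nat \<Rightarrow> 'n set) \<Rightarrow> (nat \<Rightarrow> complex^'n) \<Rightarrow> nat \<Rightarrow> (nat \<Rightarrow> complex) \<Rightarrow> nat
    \<Rightarrow> complex^'k" where
  "combined_point \<alpha> L ts d a i = (\<Sum>h\<in>{1..d}. a h *s Ppoint \<alpha> (ts h) (L i))"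

lemma sum_scale_KT_vec:
  "(\<Sum>h\<in>{1..d}. a h *s KT_vec \<alpha> L (ts h) i0 j)
     = combined_point \<alpha> L ts d a j - combined_point \<alpha> L ts d a i0"
  by (simp add: combined_point_def KT_vec_def vector_ssub_ldistrib sum_subtractf)

lemma cinner_vec_combined_point:
  assumes "\<forall>h\<in>{1..d}. KT_translated \<alpha> L r (ts h)" "i \<in> {1..r}" "q \<in> L i"
  shows "cinner_vec (combined_point \<alpha> L ts d a i) (\<alpha> q)
           = (\<Sum>h\<in>{1..d}. a h *s ts h) $ q * cinner_vec (\<alpha> q) (\<alpha> q)"
  using assms cinner_vec_Ppoint[of \<alpha> L r _ i q]
  by (simp add: combined_point_def cinner_vec_sum cinner_vec_scale sum_distrib_right mult.assoc)

lemma combination_central_iff_combined_points_eq: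
  fixes \<alpha> :: "'n::finite \<Rightarrow> complex^'k::finite"
  assumes generic: "central_generic \<alpha>"
    and card_L: "\<forall>i\<in>{1..r}. card (L i) = CARD('k) + 1"
    and cover: "(\<Union>i\<in>{1..r}. L i) = UNIV"
    and KT: "\<forall>h\<in>{1..d}. KT_translated \<alpha> L r (ts h)"
    and "i0 \<in> {1..r}"
  shows "(\<Sum>h\<in>{1..d}. a h *s ts h) \<in> central_set \<alpha>
           \<longleftrightarrow> (\<forall>j\<in>{1..r}. combined_point \<alpha> L ts d a j = combined_point \<alpha> L ts d a i0)"
    (is "?s \<in> _ \<longleftrightarrow> (\<forall>j\<in>_. ?Q j = ?Q i0)")
proof
  assume "?s \<in> central_set \<alpha>"
  then obtain p where p: "\<forall>q. cinner_vec p (\<alpha> q) = ?s $ q * cinner_vec (\<alpha> q) (\<alpha> q)"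
    by (auto simp: central_set_iff)
  have "?Q i = p" if i: "i \<in> {1..r}" for i
  proof -
    have "\<forall>q\<in>L i. cinner_vec (?Q i - p) (\<alpha> q) = 0"
      using cinner_vec_combined_point[OF KT i] p by (simp add: cinner_vec_diff)
    moreover have "card (L i) \<ge> CARD('k)" using card_L i by simp
    ultimately have "?Q i - p = 0" by (rule central_generic_orthogonal_eq_0[OF generic, rotated])
    then show ?thesis by simp
  qed
  then show "\<forall>j\<in>{1..r}. ?Q j = ?Q i0" using \<open>i0 \<in> {1..r}\<close> by simp
next
  assume Q_eq: "\<forall>j\<in>{1..r}. ?Q j = ?Q i0"
  have "cinner_vec (?Q i0) (\<alpha> q) = ?s $ q * cinner_vec (\<alpha> q) (\<alpha> q)" for q
  proof -
    obtain j where j: "j \<in> {1..r}" "q \<in> L j" using cover by blast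
    then show ?thesis using Q_eq cinner_vec_combined_point[OF KT j] by metis
  qed
  then show "?s \<in> central_set \<alpha>" by (auto simp: central_set_iff)
qed

theorem lemma3p1:
  fixes \<alpha> :: "'n::finite \<Rightarrow> complex^'k::finite"
    and L :: "nat \<Rightarrow> 'n set" and r :: nat
    and ts :: "nat \<Rightarrow> complex^'n" and d :: nat and i0 :: nat
  assumes "central_generic \<alpha>"
    and "r_set CARD('k) L r"
    and "(\<Union>i\<in>{1..r}. L i) = UNIV"
    and "\<forall>h\<in>{1..d}. KT_translated \<alpha> L r (ts h)"
    and "i0 \<in> {1..r}"
  shows "lin_indep_mod (central_set \<alpha>) ts d \<longleftrightarrow> weakly_lin_indep \<alpha> L r i0 ts d"
proof -
  have card_L: "\<forall>i\<in>{1..r}. card (L i) = CARD('k) + 1"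
    using assms(2) unfolding r_set_def by blast
  have "(\<Sum>h\<in>{1..d}. a h *s ts h) \<in> central_set \<alpha>
          \<longleftrightarrow> (\<forall>j\<in>{1..r}. j \<noteq> i0 \<longrightarrow> (\<Sum>h\<in>{1..d}. a h *s KT_vec \<alpha> L (ts h) i0 j) = 0)"
    for a
    unfolding sum_scale_KT_vec right_minus_eq
    using combination_central_iff_combined_points_eq[OF assms(1) card_L assms(3-5)] by auto
  then show ?thesis
    unfolding lin_indep_mod_def weakly_lin_indep_def by presburger
qed

end
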